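(* Let $N\ge1$, $n>0$, $k>0$, and $\gamma>0$, and suppose all $N$ channels have SNR $\gamma$. Then the optimization problem $$\max_{k_0,\dots,k_{N-1}}\prod_{i=0}^{N-1}\bigl(1-\epsilon(n,k_i,\gamma)\bigr)\quad\text{subject to }\sum_{i=0}^{N-1}k_i=k,\ k_i\ge0,$$ over real $k_i$ (equivalently, minimizing the message-splitting average AoI $\bar\Delta_{\mathrm{MS}}(n)$ over the message split) is solved by $\mathbf{k}^*=\left(\frac kN,\dots,\frac kN\right)$.
   Context: $Q(x)=\frac{1}{\sqrt{2\pi}}\int_x^\infty e^{-t^2/2}dt$ and $\epsilon(n,k,\gamma)=Q\!\left(\frac{\frac12\log_2(1+\gamma)-\frac kn}{\log_2(e)\sqrt{\frac{1}{2n}\left(1-\frac{1}{(1+\gamma)^2}\right)}}\right)$. In the message splitting (MS) scheme the $k$ message bits are split into fragments $k_0,\dots,k_{N-1}$ with $\sum k_i=k$, fragment $i$ is encoded with blocklength $n$ on channel $i$, the error probability is $\epsilon_{\mathrm{MS}}(n)=1-\prod_{i}(1-\epsilon(n,k_i,\gamma_i))$, and $\bar\Delta_{\mathrm{MS}}(n)=\frac{n(1+\epsilon_{\mathrm{MS}}(n))}{2(1-\epsilon_{\mathrm{MS}}(n))}+n$. *)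

theory Defs
  imports "HOL-Analysis.Analysis"
begin

definition Qfun :: "real \<Rightarrow> real" where
  "Qfun x = (1 / sqrt (2 * pi)) * (LBINT t:{x..}. exp (- (t\<^sup>2) / 2))"

definition eps :: "real \<Rightarrow> real \<Rightarrow> real \<Rightarrow> real" where
  "eps n k \<gamma> = Qfun ((1/2 * log 2 (1 + \<gamma>) - k / n) /
      (log 2 (exp 1) * sqrt (1 / (2 * n) * (1 - 1 / (1 + \<gamma>)\<^sup>2))))"

end

theory Submission
  imports Defs "HOL-Probability.Probability"
begin

text \<open>
  With \<open>\<Phi>\<close> the standard normal distribution function, \<open>1 - \<epsilon>(n, k, \<gamma>) = \<Phi>(\<alpha> + \<beta> k)\<close> for
  constants \<open>\<alpha>, \<beta>\<close> depending only on \<open>n\<close> and \<open>\<gamma>\<close>. Since \<open>\<Phi>\<close> is log-concave (equivalently,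
  \<open>\<phi>/\<Phi>\<close> is decreasing, which follows by comparing \<open>\<Phi>(x) \<phi>(y)\<close> and \<open>\<Phi>(y) \<phi>(x)\<close> after a shift
  of the integration variable), so is \<open>k \<mapsto> 1 - \<epsilon>(n, k, \<gamma>)\<close>, and Jensen's inequality for
  the concave function \<open>ln (1 - \<epsilon>(n, \<cdot>, \<gamma>))\<close> shows that the product of the success
  probabilities is largest when all fragments have the same size.
\<close>

definition std_normal_cdf :: "real \<Rightarrow> real" where
  "std_normal_cdf x = (LBINT t:{..<x}. std_normal_density t)"

lemma set_integrable_std_normal_density:
  "A \<in> sets lborel \<Longrightarrow> set_integrable lborel A std_normal_density"
  unfolding set_integrable_def
  using integrable_mult_indicator[of A lborel std_normal_density] by simp

lemma continuous_on_std_normal_density: "continuous_on S std_normal_density"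
  unfolding std_normal_density_def by (auto intro!: continuous_intros)

lemma one_minus_Qfun_eq_std_normal_cdf: "1 - Qfun x = std_normal_cdf x"
proof -
  have "(LBINT t:UNIV. std_normal_density t) =
      std_normal_cdf x + (LBINT t:{x..}. std_normal_density t)"
    unfolding std_normal_cdf_def
    by (subst set_integral_Un[symmetric])
      (auto intro!: set_integrable_std_normal_density
        arg_cong[where f="\<lambda>S. set_lebesgue_integral lborel S _"])
  moreover have "(LBINT t:UNIV. std_normal_density t) = 1"
    unfolding set_lebesgue_integral_def by simp
  ultimately show ?thesis
    unfolding Qfun_def std_normal_density_def by simp
qed

lemma std_normal_cdf_has_real_derivative:
  "(std_normal_cdf has_real_derivative std_normal_density t) (at t)"
proof -
  define b where "b = t + 1"
  have split: "std_normal_cdf x = (LBINT s:{..b}. std_normal_density s) - integral {x..b} std_normal_density"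
    if "x \<le> b" for x
  proof -
    have "(LBINT s:{..b}. std_normal_density s) =
        std_normal_cdf x + (LBINT s:{x..b}. std_normal_density s)"
      unfolding std_normal_cdf_def using that
      by (subst set_integral_Un[symmetric])
        (auto intro!: set_integrable_std_normal_density
          arg_cong[where f="\<lambda>S. set_lebesgue_integral lborel S _"])
    moreover have "(LBINT s:{x..b}. std_normal_density s) = integral {x..b} std_normal_density"
      by (rule set_borel_integral_eq_integral(2)) (auto intro!: set_integrable_std_normal_density)
    ultimately show ?thesis by simp
  qed
  have "((\<lambda>x. integral {x..b} std_normal_density) has_real_derivative - std_normal_density t)
      (at t within {t - 1..b})"
    by (rule integral_has_real_derivative') (auto simp: b_def intro!: continuous_on_std_normal_density)
  then have "((\<lambda>x. integral {x..b} std_normal_density) has_real_derivative - std_normal_density t)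
      (at t within {t - 1<..<b})"
    by (rule has_field_derivative_subset) auto
  then have "((\<lambda>x. integral {x..b} std_normal_density) has_real_derivative - std_normal_density t) (at t)"
    by (subst (asm) at_within_open) (auto simp: b_def)
  then have "((\<lambda>x. (LBINT s:{..b}. std_normal_density s) - integral {x..b} std_normal_density)
      has_real_derivative std_normal_density t) (at t)"
    using DERIV_diff[OF DERIV_const] by fastforce
  then show ?thesis
    by (rule has_field_derivative_transform_within_open[where S="{t - 1<..<b}"])
      (auto simp: b_def split)
qed

lemma std_normal_cdf_pos: "std_normal_cdf x > 0"
proof -
  define m where "m = std_normal_density (\<bar>x\<bar> + 2)"
  have "0 < m"
    unfolding m_def std_normal_density_def by simp
  have "m \<le> std_normal_density t" if "t \<in> {x - 2..x - 1}" for t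
  proof -
    from that have "\<bar>t\<bar> \<le> \<bar>\<bar>x\<bar> + 2\<bar>" by auto
    then have "t\<^sup>2 \<le> (\<bar>x\<bar> + 2)\<^sup>2"
      by (simp only: abs_le_square_iff)
    then show ?thesis
      unfolding m_def std_normal_density_def by (intro mult_left_mono) auto
  qed
  then have "m \<le> integral {x - 2..x - 1} std_normal_density"
    using integral_le[of "\<lambda>_. m" "{x - 2..x - 1}" std_normal_density]
    by (simp add: integrable_continuous_interval continuous_on_std_normal_density)
  also have "\<dots> = (LBINT s:{x - 2..x - 1}. std_normal_density s)"
    by (rule set_borel_integral_eq_integral(2)[symmetric])
      (auto intro!: set_integrable_std_normal_density)
  also have "\<dots> \<le> std_normal_cdf x"
    using set_integrable_std_normal_density[of "{x - 2..x - 1}"]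
      set_integrable_std_normal_density[of "{..<x}"]
    unfolding std_normal_cdf_def set_lebesgue_integral_def set_integrable_def
    by (intro integral_mono) (auto split: split_indicator)
  finally show ?thesis
    using \<open>0 < m\<close> by linarith
qed

lemma std_normal_density_mult:
  "std_normal_density a * std_normal_density b = exp (- (a\<^sup>2 + b\<^sup>2) / 2) / (2 * pi)"
proof -
  have "sqrt (2 * pi) * sqrt (2 * pi) = 2 * pi" by simp
  then show ?thesis
    unfolding std_normal_density_def
    by (simp add: field_simps flip: exp_add)
qed

lemma std_normal_density_shift_mult_le:
  fixes s x y :: real
  assumes "x \<le> y" "s \<le> y"
  shows "std_normal_density ((x - y) + s) * std_normal_density y \<le>
    std_normal_density s * std_normal_density x"
proof -
  have "((x - y) + s)\<^sup>2 + y\<^sup>2 - (s\<^sup>2 + x\<^sup>2) = 2 * (y - x) * (y - s)"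
    by (simp add: power2_eq_square algebra_simps)
  moreover have "0 \<le> 2 * (y - x) * (y - s)"
    using assms by simp
  ultimately have "- (((x - y) + s)\<^sup>2 + y\<^sup>2) / 2 \<le> - (s\<^sup>2 + x\<^sup>2) / 2"
    by (simp add: divide_right_mono)
  then show ?thesis
    unfolding std_normal_density_mult by (intro divide_right_mono) auto
qed

lemma std_normal_density_mult_cdf_mono:
  assumes "x \<le> y"
  shows "std_normal_density y * std_normal_cdf x \<le> std_normal_density x * std_normal_cdf y"
proof -
  define f where "f t = indicator {..<x} t * (std_normal_density y * std_normal_density t)" for t :: real
  define g where "g t = indicator {..<y} t * (std_normal_density x * std_normal_density t)" for t :: real
  have "integrable lborel f"
    unfolding f_def
    using integrable_mult_indicator[of "{..<x}" lborel "\<lambda>t. std_normal_density y * std_normal_density t"]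
    by simp
  have "integrable lborel g"
    unfolding g_def
    using integrable_mult_indicator[of "{..<y}" lborel "\<lambda>t. std_normal_density x * std_normal_density t"]
    by simp
  have "std_normal_density y * std_normal_cdf x = integral\<^sup>L lborel f"
    unfolding std_normal_cdf_def set_lebesgue_integral_def f_def by (simp add: mult.left_commute)
  also have "\<dots> = (\<integral>s. f ((x - y) + 1 * s) \<partial>lborel)"
    using lborel_integral_real_affine[of 1 f "x - y"] by simp
  also have "\<dots> \<le> integral\<^sup>L lborel g"
  proof (rule integral_mono)
    show "integrable lborel (\<lambda>s. f ((x - y) + 1 * s))"
      using lborel_integrable_real_affine_iff[of 1 f "x - y"] \<open>integrable lborel f\<close> by simp
    show "f ((x - y) + 1 * s) \<le> g s" for s
      using std_normal_density_shift_mult_le[OF assms, of s]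
      by (cases "s < y") (auto simp: f_def g_def mult_ac)
  qed fact
  also have "\<dots> = std_normal_density x * std_normal_cdf y"
    unfolding std_normal_cdf_def set_lebesgue_integral_def g_def by (simp add: mult.left_commute)
  finally show ?thesis .
qed

lemma log_concave_std_normal_cdf: "concave_on UNIV (\<lambda>x. ln (std_normal_cdf x))"
  unfolding concave_on_def
proof (rule convex_on_realI)
  show "((\<lambda>x. - ln (std_normal_cdf x)) has_real_derivative
      - (std_normal_density x / std_normal_cdf x)) (at x)" for x
    using DERIV_minus[OF DERIV_chain2[OF DERIV_ln_divide[OF std_normal_cdf_pos]
          std_normal_cdf_has_real_derivative]]
    by simp
  show "- (std_normal_density x / std_normal_cdf x) \<le> - (std_normal_density y / std_normal_cdf y)"
    if "x \<le> y" for x y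
    using std_normal_density_mult_cdf_mono[OF that] std_normal_cdf_pos[of x] std_normal_cdf_pos[of y]
    by (simp add: divide_simps mult.commute)
qed simp

lemma concave_on_compose_affine:
  fixes f :: "real \<Rightarrow> real"
  assumes "concave_on UNIV f"
  shows "concave_on UNIV (\<lambda>x. f (a + b * x))"
proof -
  have "f ((1 - t) * (a + b * x) + t * (a + b * y)) \<ge> (1 - t) * f (a + b * x) + t * f (a + b * y)"
    if "0 \<le> t" "t \<le> 1" for t x y
    using concave_onD[OF assms that] by simp
  moreover have "(1 - t) * (a + b * x) + t * (a + b * y) = a + b * ((1 - t) * x + t * y)" for t x y :: real
    by (simp add: algebra_simps)
  ultimately show ?thesis
    by (intro concave_on_linorderI) auto
qed

lemma prod_le_power_mean_if_log_concave:
  fixes f :: "real \<Rightarrow> real" and x :: "'a \<Rightarrow> real"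
  assumes pos: "\<And>t. f t > 0" and concave: "concave_on UNIV (\<lambda>t. ln (f t))"
    and "finite I" "I \<noteq> {}"
  shows "(\<Prod>i\<in>I. f (x i)) \<le> f ((\<Sum>i\<in>I. x i) / card I) ^ card I"
proof -
  define c where "c = real (card I)"
  define m where "m = (\<Sum>i\<in>I. x i) / c"
  have "c > 0" unfolding c_def using assms(3,4) by (simp add: card_gt_0_iff)
  have "(\<Sum>i\<in>I. (1 / c) *\<^sub>R x i) = m"
    by (simp add: m_def sum_divide_distrib)
  moreover have "(\<Sum>i\<in>I. 1 / c) = 1"
    using \<open>c > 0\<close> by (simp add: c_def)
  ultimately have "(\<Sum>i\<in>I. (1 / c) * ln (f (x i))) \<le> ln (f m)"
    using concave_on_sum[OF assms(3,4) concave, of "\<lambda>_. 1 / c" x] \<open>c > 0\<close> by simp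
  then have "(\<Sum>i\<in>I. ln (f (x i))) \<le> c * ln (f m)"
    using \<open>c > 0\<close> by (simp add: sum_divide_distrib[symmetric] pos_divide_le_eq mult.commute)
  then have "exp (\<Sum>i\<in>I. ln (f (x i))) \<le> exp (c * ln (f m))"
    by simp
  moreover have "exp (\<Sum>i\<in>I. ln (f (x i))) = (\<Prod>i\<in>I. f (x i))"
    using pos assms(3) by (simp add: exp_sum)
  moreover have "exp (c * ln (f m)) = f m ^ card I"
    using pos by (simp add: c_def ln_realpow[symmetric])
  ultimately show ?thesis
    by (simp add: m_def c_def)
qed

text \<open>No sign conditions are needed here (division by zero is zero on both sides), so of the
  hypotheses of \<open>corollary1\<close> only \<open>N \<ge> 1\<close> and the sum constraint are used.\<close>

lemma one_minus_eps_affine: "\<exists>\<alpha> \<beta>. \<forall>k. 1 - eps n k \<gamma> = std_normal_cdf (\<alpha> + \<beta> * k)"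
proof (intro exI allI)
  define c where "c = log 2 (exp 1) * sqrt (1 / (2 * n) * (1 - 1 / (1 + \<gamma>)\<^sup>2))"
  show "1 - eps n k \<gamma> = std_normal_cdf (1/2 * log 2 (1 + \<gamma>) / c + (- 1 / (n * c)) * k)" for k
    unfolding eps_def one_minus_Qfun_eq_std_normal_cdf c_def[symmetric]
    by (simp add: diff_divide_distrib)
qed

theorem corollary1:
  fixes N :: nat and n k \<gamma> :: real and ks :: "nat \<Rightarrow> real"
  assumes "N \<ge> 1" and "n > 0" and "k > 0" and "\<gamma> > 0"
    and "\<forall>i<N. ks i \<ge> 0" and "(\<Sum>i<N. ks i) = k"
  shows "(\<Prod>i<N. 1 - eps n (ks i) \<gamma>) \<le> (\<Prod>i<N. 1 - eps n (k / real N) \<gamma>)"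
proof -
  obtain \<alpha> \<beta> where eq: "\<And>k. 1 - eps n k \<gamma> = std_normal_cdf (\<alpha> + \<beta> * k)"
    using one_minus_eps_affine by blast
  have "(\<Prod>i<N. std_normal_cdf (\<alpha> + \<beta> * ks i)) \<le>
      std_normal_cdf (\<alpha> + \<beta> * ((\<Sum>i<N. ks i) / card {..<N})) ^ card {..<N}"
    using assms(1)
    by (intro prod_le_power_mean_if_log_concave std_normal_cdf_pos
        concave_on_compose_affine log_concave_std_normal_cdf) (auto simp: lessThan_empty_iff)
  then show ?thesis
    by (simp add: eq assms(6))
qed

end
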